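(* Let $G$ be a graph with $n$ vertices, $m\geq 1$ edges and $t(G)$ triangles. Then \[ \lambda_n(G)\geq \frac{2m^2-3n\,t(G)}{m(n^2-2m)}\,n, \] with equality if and only if $G$ is a regular complete multipartite graph, i.e. a complete $k$-partite graph for some $k\geq 2$ with all $k$ parts of equal size.
   Context: All graphs are finite, simple and undirected. $t(G)$ is the number of triangles in $G$. For a graph $G$ of order $n$, $L(G)=D(G)-A(G)$ is its Laplacian ($A(G)$ the adjacency matrix, $D(G)$ the diagonal degree matrix), with eigenvalues $0=\lambda_1(G)\leq\dots\leq\lambda_n(G)$; $\lambda_n(G)$ is the largest Laplacian eigenvalue. *)

theory Defs
  imports "HOL-Analysis.Analysis"
begin

text \<open>A finite simple graph on the vertex type 'n (finite): symmetric, irreflexive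
  adjacency relation E. The number of vertices is CARD('n).\<close>

definition simple_graph :: "('n::finite \<Rightarrow> 'n \<Rightarrow> bool) \<Rightarrow> bool" where
  "simple_graph E \<longleftrightarrow> (\<forall>u v. E u v \<longleftrightarrow> E v u) \<and> (\<forall>u. \<not> E u u)"

definition edges :: "('n::finite \<Rightarrow> 'n \<Rightarrow> bool) \<Rightarrow> 'n set set" where
  "edges E = {{u, v} | u v. E u v}"

definition num_edges :: "('n::finite \<Rightarrow> 'n \<Rightarrow> bool) \<Rightarrow> nat" where
  "num_edges E = card (edges E)"

definition triangles :: "('n::finite \<Rightarrow> 'n \<Rightarrow> bool) \<Rightarrow> 'n set set" where
  "triangles E = {{a, b, c} | a b c. E a b \<and> E b c \<and> E a c}"

definition num_triangles :: "('n::finite \<Rightarrow> 'n \<Rightarrow> bool) \<Rightarrow> nat" where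
  "num_triangles E = card (triangles E)"

definition degree :: "('n::finite \<Rightarrow> 'n \<Rightarrow> bool) \<Rightarrow> 'n \<Rightarrow> nat" where
  "degree E v = card {u. E v u}"

definition laplacian :: "('n::finite \<Rightarrow> 'n \<Rightarrow> bool) \<Rightarrow> real^'n^'n" where
  "laplacian E = (\<chi> i j. (if i = j then real (degree E i) else 0) - (if E i j then 1 else 0))"

definition eigenvalue :: "real^'n^'n \<Rightarrow> real \<Rightarrow> bool" where
  "eigenvalue A \<mu> \<longleftrightarrow> (\<exists>x. x \<noteq> 0 \<and> A *v x = \<mu> *\<^sub>R x)"

text \<open>Largest Laplacian eigenvalue lambda_n(G) (the Laplacian is symmetric,
  so all its eigenvalues are real).\<close>
definition lap_max_eig :: "('n::finite \<Rightarrow> 'n \<Rightarrow> bool) \<Rightarrow> real" where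
  "lap_max_eig E = Max {\<mu>. eigenvalue (laplacian E) \<mu>}"

definition regular_complete_multipartite :: "('n::finite \<Rightarrow> 'n \<Rightarrow> bool) \<Rightarrow> bool" where
  "regular_complete_multipartite E \<longleftrightarrow>
     (\<exists>(k::nat) (f::'n \<Rightarrow> nat). k \<ge> 2 \<and> range f = {0..<k} \<and>
        (\<forall>i<k. \<forall>j<k. card {v. f v = i} = card {v. f v = j}) \<and>
        (\<forall>u v. E u v \<longleftrightarrow> f u \<noteq> f v))"

end

theory Submission
  imports Defs
begin

text \<open>For a vertex \<open>w\<close> let \<open>x\<^sub>w\<close> be the indicator vector of its neighbourhood minus its mean
  \<open>d\<^sub>w/n\<close>. Since the Laplacian is symmetric, \<open>\<lambda>\<^sub>n\<close> bounds the Rayleigh quotient of every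
  vector, hence also the averaged quotient
  \<open>\<Sum>\<^sub>w x\<^sub>w\<^sup>T L x\<^sub>w / \<Sum>\<^sub>w |x\<^sub>w|\<^sup>2 = (\<Sum> d\<^sup>2 - 6t) / (2m - \<Sum> d\<^sup>2 / n)\<close>.
  By Cauchy-Schwarz, \<open>4m\<^sup>2 \<le> n \<Sum> d\<^sup>2\<close>, and this quotient is at least the claimed bound,
  with equality iff \<open>G\<close> is regular. Equality in the theorem therefore forces \<open>G\<close> to be regular
  and every \<open>x\<^sub>w\<close> to be an eigenvector for \<open>\<lambda>\<^sub>n\<close>; reading off coordinates gives
  \<open>\<lambda>\<^sub>n = n\<close> and that non-adjacent vertices have equal neighbourhoods, i.e. \<open>G\<close> is complete
  multipartite. Conversely, in a complete multipartite graph every \<open>x\<^sub>w\<close> is an eigenvector for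
  \<open>n\<close>, and \<open>\<lambda>\<^sub>n \<le> n\<close> holds for every graph.\<close>

lemma inner_matrix_vector_symmetric:
  fixes M :: "real^'n^'n"
  assumes "transpose M = M"
  shows "x \<bullet> (M *v y) = y \<bullet> (M *v x)"
  by (metis assms dot_lmul_matrix inner_commute vector_transpose_matrix)

text \<open>Along the line \<open>v - t M v\<close> the form equals \<open>t\<^sup>2 c - 2t |M v|\<^sup>2\<close> with \<open>c \<ge> 0\<close>,
  which is negative for small \<open>t > 0\<close> unless \<open>M v = 0\<close>.\<close>
lemma psd_quadratic_form_eq_0_imp_kernel:
  fixes M :: "real^'n^'n"
  assumes sym: "transpose M = M" and psd: "\<And>x. 0 \<le> x \<bullet> (M *v x)"
    and v: "v \<bullet> (M *v v) = 0"
  shows "M *v v = 0"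
proof -
  define w where "w = M *v v"
  define a where "a = w \<bullet> w"
  define c where "c = w \<bullet> (M *v w)"
  have "c \<ge> 0" using psd by (simp add: c_def)
  have expand: "(v - t *\<^sub>R w) \<bullet> (M *v (v - t *\<^sub>R w)) = t\<^sup>2 * c - 2 * t * a" for t
    using inner_matrix_vector_symmetric[OF sym, of v w] v
    by (simp add: a_def c_def w_def algebra_simps inner_commute power2_eq_square)
  have "a \<le> 0"
  proof (rule ccontr)
    assume "\<not> a \<le> 0"
    define t where "t = a / (c + 1)"
    have "t > 0" using \<open>\<not> a \<le> 0\<close> \<open>c \<ge> 0\<close> by (simp add: t_def)
    have "t * c \<le> a"
      using \<open>\<not> a \<le> 0\<close> \<open>c \<ge> 0\<close> by (simp add: t_def field_simps)
    moreover have "t * (t * c - 2 * a) \<ge> 0"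
      using psd[of "v - t *\<^sub>R w"] unfolding expand by (simp add: power2_eq_square algebra_simps)
    then have "t * c - 2 * a \<ge> 0"
      using \<open>t > 0\<close> by (simp add: zero_le_mult_iff)
    ultimately show False using \<open>\<not> a \<le> 0\<close> by linarith
  qed
  then have "w = 0" by (metis a_def inner_gt_zero_iff linorder_not_le)
  then show ?thesis by (simp add: w_def)
qed

lemma rayleigh_eq_imp_eigenvector:
  fixes M :: "real^'n^'n"
  assumes sym: "transpose M = M" and le: "\<And>x. x \<bullet> (M *v x) \<le> \<mu> * (x \<bullet> x)"
    and v: "v \<bullet> (M *v v) = \<mu> * (v \<bullet> v)"
  shows "M *v v = \<mu> *\<^sub>R v"
proof -
  define M' where "M' = \<mu> *\<^sub>R mat 1 - M"
  have M': "M' *v x = \<mu> *\<^sub>R x - M *v x" for x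
    by (simp add: M'_def matrix_vector_mult_diff_rdistrib flip: scaleR_matrix_vector_assoc)
  have "transpose M' = M'"
    using sym unfolding M'_def by (simp add: transpose_def vec_eq_iff mat_def)
  moreover have "0 \<le> x \<bullet> (M' *v x)" for x
    using le[of x] by (simp add: M' inner_diff_right)
  moreover have "v \<bullet> (M' *v v) = 0"
    using v by (simp add: M' inner_diff_right)
  ultimately have "M' *v v = 0" by (rule psd_quadratic_form_eq_0_imp_kernel)
  then show ?thesis by (simp add: M')
qed

lemma eigenvalue_le_rayleigh_bound:
  fixes M :: "real^'n^'n"
  assumes "eigenvalue M \<nu>" and le: "\<And>x. x \<bullet> (M *v x) \<le> \<mu> * (x \<bullet> x)"
  shows "\<nu> \<le> \<mu>"
proof -
  obtain x where "x \<noteq> 0" and "M *v x = \<nu> *\<^sub>R x"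
    using assms(1) unfolding eigenvalue_def by blast
  then have "\<nu> * (x \<bullet> x) \<le> \<mu> * (x \<bullet> x)" and "x \<bullet> x > 0"
    using le[of x] by auto
  then show ?thesis by simp
qed

lemma symmetric_eigenvalues_finite:
  fixes M :: "real^'n^'n"
  assumes sym: "transpose M = M"
  shows "finite {\<mu>. eigenvalue M \<mu>}"
proof -
  define S where "S = {\<mu>. eigenvalue M \<mu>}"
  define v where "v \<mu> = (SOME x. x \<noteq> 0 \<and> M *v x = \<mu> *\<^sub>R x)" for \<mu>
  have v: "v \<mu> \<noteq> 0 \<and> M *v v \<mu> = \<mu> *\<^sub>R v \<mu>" if "\<mu> \<in> S" for \<mu>
  proof -
    have "\<exists>x. x \<noteq> 0 \<and> M *v x = \<mu> *\<^sub>R x"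
      using that by (simp add: S_def eigenvalue_def)
    then show ?thesis unfolding v_def by (rule someI_ex)
  qed
  have orth: "v \<mu> \<bullet> v \<nu> = 0" if "\<mu> \<in> S" "\<nu> \<in> S" "\<mu> \<noteq> \<nu>" for \<mu> \<nu>
  proof -
    have "\<nu> * (v \<mu> \<bullet> v \<nu>) = \<mu> * (v \<mu> \<bullet> v \<nu>)"
      using inner_matrix_vector_symmetric[OF sym, of "v \<mu>" "v \<nu>"] v[OF that(1)] v[OF that(2)]
      by (simp add: inner_commute)
    then show ?thesis using that(3) by simp
  qed
  have inj: "inj_on v S"
  proof (rule inj_onI, rule ccontr)
    fix \<mu> \<nu> assume "\<mu> \<in> S" "\<nu> \<in> S" "v \<mu> = v \<nu>" "\<mu> \<noteq> \<nu>"
    then show False using orth[of \<mu> \<nu>] v[of \<mu>] by simp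
  qed
  have "pairwise orthogonal (v ` S)"
    using orth by (auto simp: pairwise_def orthogonal_def)
  moreover have "0 \<notin> v ` S" using v by auto
  ultimately have "independent (v ` S)"
    by (rule pairwise_orthogonal_independent)
  then have "finite (v ` S)"
    using independent_bound by blast
  then show ?thesis
    using finite_imageD[OF _ inj] by (simp add: S_def)
qed

lemma symmetric_rayleigh_max_eigenvalue:
  fixes M :: "real^'n^'n"
  assumes sym: "transpose M = M"
  obtains \<mu> where "eigenvalue M \<mu>" and "\<And>x. x \<bullet> (M *v x) \<le> \<mu> * (x \<bullet> x)"
proof -
  have "continuous_on (sphere 0 1) (\<lambda>x. x \<bullet> (M *v x))"
    by (intro continuous_intros matrix_vector_mult_linear_continuous_on
        [THEN continuous_on_compose2[of UNIV]]) auto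
  moreover have "sphere (0::real^'n) 1 \<noteq> {}"
    using vector_choose_size[of 1] by auto
  ultimately obtain v where v: "v \<in> sphere 0 1"
    and v_max: "\<And>y. y \<in> sphere 0 1 \<Longrightarrow> y \<bullet> (M *v y) \<le> v \<bullet> (M *v v)"
    using continuous_attains_sup[OF compact_sphere] by blast
  define \<mu> where "\<mu> = v \<bullet> (M *v v)"
  have le: "x \<bullet> (M *v x) \<le> \<mu> * (x \<bullet> x)" for x
  proof (cases "x = 0")
    case False
    have "(x /\<^sub>R norm x) \<bullet> (M *v (x /\<^sub>R norm x)) \<le> \<mu>"
      using v_max[of "x /\<^sub>R norm x"] False by (simp add: \<mu>_def)
    moreover have "(x /\<^sub>R norm x) \<bullet> (M *v (x /\<^sub>R norm x)) = (x \<bullet> (M *v x)) / (x \<bullet> x)"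
      by (simp add: matrix_vector_mult_scaleR dot_square_norm power2_eq_square field_simps)
    ultimately show ?thesis
      using False by (simp add: divide_le_eq mult.commute)
  qed simp
  have "v \<bullet> v = 1" using v by (simp add: dot_square_norm)
  then have "M *v v = \<mu> *\<^sub>R v"
    by (intro rayleigh_eq_imp_eigenvector[OF sym le]) (simp add: \<mu>_def)
  moreover have "v \<noteq> 0" using v by auto
  ultimately have "eigenvalue M \<mu>" unfolding eigenvalue_def by blast
  then show thesis using le by (rule that)
qed

lemma symmetric_Max_eigenvalue:
  fixes M :: "real^'n^'n"
  assumes sym: "transpose M = M"
  shows "eigenvalue M (Max {\<mu>. eigenvalue M \<mu>})"
    and "x \<bullet> (M *v x) \<le> Max {\<mu>. eigenvalue M \<mu>} * (x \<bullet> x)"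
proof -
  obtain \<mu> where "eigenvalue M \<mu>" and le: "\<And>x. x \<bullet> (M *v x) \<le> \<mu> * (x \<bullet> x)"
    using symmetric_rayleigh_max_eigenvalue[OF sym] by blast
  moreover have "Max {\<mu>. eigenvalue M \<mu>} = \<mu>"
  proof (rule Max_eqI)
    show "finite {\<mu>. eigenvalue M \<mu>}" by (rule symmetric_eigenvalues_finite[OF sym])
    show "\<nu> \<le> \<mu>" if "\<nu> \<in> {\<mu>. eigenvalue M \<mu>}" for \<nu>
      using eigenvalue_le_rayleigh_bound[OF _ le] that by blast
  qed (use \<open>eigenvalue M \<mu>\<close> in simp)
  ultimately show "eigenvalue M (Max {\<mu>. eigenvalue M \<mu>})"
    and "x \<bullet> (M *v x) \<le> Max {\<mu>. eigenvalue M \<mu>} * (x \<bullet> x)"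
    by simp_all
qed

lemma sum_quadratic_forms_le:
  fixes M :: "real^'n^'n" and x :: "'i \<Rightarrow> real^'n"
  assumes le: "\<And>y. y \<bullet> (M *v y) \<le> \<mu> * (y \<bullet> y)"
  shows "(\<Sum>i\<in>I. x i \<bullet> (M *v x i)) \<le> \<mu> * (\<Sum>i\<in>I. x i \<bullet> x i)"
  unfolding sum_distrib_left by (intro sum_mono le)

lemma sum_quadratic_forms_eq_iff:
  fixes M :: "real^'n^'n" and x :: "'i \<Rightarrow> real^'n"
  assumes sym: "transpose M = M" and le: "\<And>y. y \<bullet> (M *v y) \<le> \<mu> * (y \<bullet> y)"
    and "finite I"
  shows "(\<Sum>i\<in>I. x i \<bullet> (M *v x i)) = \<mu> * (\<Sum>i\<in>I. x i \<bullet> x i)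
    \<longleftrightarrow> (\<forall>i\<in>I. M *v x i = \<mu> *\<^sub>R x i)"
proof
  assume "(\<Sum>i\<in>I. x i \<bullet> (M *v x i)) = \<mu> * (\<Sum>i\<in>I. x i \<bullet> x i)"
  then have "(\<Sum>i\<in>I. \<mu> * (x i \<bullet> x i) - x i \<bullet> (M *v x i)) = 0"
    by (simp add: sum_subtractf sum_distrib_left)
  moreover have "\<forall>i\<in>I. 0 \<le> \<mu> * (x i \<bullet> x i) - x i \<bullet> (M *v x i)"
    using le by simp
  ultimately have "\<forall>i\<in>I. \<mu> * (x i \<bullet> x i) - x i \<bullet> (M *v x i) = 0"
    using sum_nonneg_eq_0_iff[OF \<open>finite I\<close>, of "\<lambda>i. \<mu> * (x i \<bullet> x i) - x i \<bullet> (M *v x i)"]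
    by simp
  then show "\<forall>i\<in>I. M *v x i = \<mu> *\<^sub>R x i"
    by (auto intro: rayleigh_eq_imp_eigenvector[OF sym le])
next
  assume "\<forall>i\<in>I. M *v x i = \<mu> *\<^sub>R x i"
  then show "(\<Sum>i\<in>I. x i \<bullet> (M *v x i)) = \<mu> * (\<Sum>i\<in>I. x i \<bullet> x i)"
    by (simp add: sum_distrib_left)
qed

lemma sum_squared_deviation:
  fixes f :: "'a \<Rightarrow> real"
  assumes "finite A"
  shows "(\<Sum>i\<in>A. (f i - sum f A / card A)\<^sup>2) = (\<Sum>i\<in>A. (f i)\<^sup>2) - (sum f A)\<^sup>2 / card A"
proof (cases "A = {}")
  case False
  define a where "a = sum f A / card A"
  have "(\<Sum>i\<in>A. (f i - a)\<^sup>2) = (\<Sum>i\<in>A. (f i)\<^sup>2 - 2 * a * f i + a\<^sup>2)"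
    by (simp add: power2_eq_square algebra_simps)
  also have "\<dots> = (\<Sum>i\<in>A. (f i)\<^sup>2) - 2 * a * sum f A + card A * a\<^sup>2"
    by (simp add: sum.distrib sum_subtractf sum_distrib_left)
  also have "\<dots> = (\<Sum>i\<in>A. (f i)\<^sup>2) - (sum f A)\<^sup>2 / card A"
    using False assms by (simp add: a_def field_simps power2_eq_square)
  finally show ?thesis by (simp add: a_def)
qed simp

lemma card_eq_mult_card_image:
  assumes "finite A" and "\<And>b. b \<in> g ` A \<Longrightarrow> card {a\<in>A. g a = b} = k"
  shows "card A = k * card (g ` A)"
proof -
  have "A = (\<Union>b\<in>g ` A. {a\<in>A. g a = b})" by auto
  then have "card A = card (\<Union>b\<in>g ` A. {a\<in>A. g a = b})" by simp
  also have "\<dots> = (\<Sum>b\<in>g ` A. card {a\<in>A. g a = b})"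
    by (rule card_UN_disjoint) (use \<open>finite A\<close> in auto)
  finally show ?thesis using assms(2) by simp
qed

lemma real_card_Collect: "real (card {x::'a::finite. P x}) = (\<Sum>x\<in>UNIV. if P x then 1 else 0)"
  by (simp add: sum.If_cases)

text \<open>The difference of the two sides factors as
  \<open>(2nm - 6t) (ns - 4m\<^sup>2) / ((2m - s/n) 2m (n\<^sup>2 - 2m))\<close>.\<close>
lemma triangle_bound_le_quotient:
  fixes n m t s :: real
  assumes "0 < n" "0 < m" "2 * m < n\<^sup>2" "6 * t < n * (2 * m)" "4 * m\<^sup>2 \<le> n * s" "s < n * (2 * m)"
  shows "(2 * m\<^sup>2 - 3 * n * t) / (m * (n\<^sup>2 - 2 * m)) * n \<le> (s - 6 * t) / (2 * m - s / n)"
    and "(2 * m\<^sup>2 - 3 * n * t) / (m * (n\<^sup>2 - 2 * m)) * n = (s - 6 * t) / (2 * m - s / n)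
      \<longleftrightarrow> 4 * m\<^sup>2 = n * s"
proof -
  let ?R = "(2 * m\<^sup>2 - 3 * n * t) / (m * (n\<^sup>2 - 2 * m)) * n"
  define N where "N = 2 * m - s / n"
  define D where "D = 2 * m * (n\<^sup>2 - 2 * m)"
  define X where "X = (2 * n * m - 6 * t) * (n * s - 4 * m\<^sup>2) / (N * D)"
  have "N > 0" using assms(1,6) by (simp add: N_def field_simps)
  have "n\<^sup>2 - 2 * m > 0" using assms(3) by simp
  then have "D > 0" using assms(2) by (simp add: D_def)
  have R: "?R = 2 * n * (2 * m\<^sup>2 - 3 * n * t) / D"
    using \<open>n\<^sup>2 - 2 * m > 0\<close> assms(2) by (simp add: D_def field_simps)
  have "2 * n * (2 * m\<^sup>2 - 3 * n * t) * N = 2 * (2 * m\<^sup>2 - 3 * n * t) * (2 * m * n - s)"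
    using assms(1) by (simp add: N_def field_simps)
  then have numerator: "(s - 6 * t) * D - 2 * n * (2 * m\<^sup>2 - 3 * n * t) * N
      = (2 * n * m - 6 * t) * (n * s - 4 * m\<^sup>2)"
    by (simp add: D_def algebra_simps power2_eq_square)
  have diff: "(s - 6 * t) / N - ?R = X"
    unfolding R X_def numerator[symmetric] using \<open>N > 0\<close> \<open>D > 0\<close> by (simp add: field_simps)
  have "0 \<le> (2 * n * m - 6 * t) * (n * s - 4 * m\<^sup>2)"
    using assms(4,5) by simp
  then have "X \<ge> 0"
    using \<open>N > 0\<close> \<open>D > 0\<close> by (simp add: X_def)
  then show "?R \<le> (s - 6 * t) / (2 * m - s / n)"
    using diff unfolding N_def by linarith
  have "X = 0 \<longleftrightarrow> n * s - 4 * m\<^sup>2 = 0"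
    using assms(4) \<open>N > 0\<close> \<open>D > 0\<close> by (simp add: X_def)
  then show "?R = (s - 6 * t) / (2 * m - s / n) \<longleftrightarrow> 4 * m\<^sup>2 = n * s"
    using diff unfolding N_def by auto
qed

definition adj :: "('n::finite \<Rightarrow> 'n \<Rightarrow> bool) \<Rightarrow> 'n \<Rightarrow> 'n \<Rightarrow> real" where
  "adj E u v = (if E u v then 1 else 0)"

definition deg :: "('n::finite \<Rightarrow> 'n \<Rightarrow> bool) \<Rightarrow> 'n \<Rightarrow> real" where
  "deg E v = real (degree E v)"

definition regular_graph :: "('n::finite \<Rightarrow> 'n \<Rightarrow> bool) \<Rightarrow> bool" where
  "regular_graph E \<longleftrightarrow> (\<exists>d. \<forall>v. degree E v = d)"

definition centered_nbhd :: "('n::finite \<Rightarrow> 'n \<Rightarrow> bool) \<Rightarrow> 'n \<Rightarrow> real^'n" where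
  "centered_nbhd E w = (\<chi> v. adj E w v - deg E w / real CARD('n))"

definition nbhd_quotient :: "('n::finite \<Rightarrow> 'n \<Rightarrow> bool) \<Rightarrow> real" where
  "nbhd_quotient E = (\<Sum>w\<in>UNIV. centered_nbhd E w \<bullet> (laplacian E *v centered_nbhd E w))
    / (\<Sum>w\<in>UNIV. centered_nbhd E w \<bullet> centered_nbhd E w)"

lemma adj_squared [simp]: "adj E u v * adj E u v = adj E u v"
  by (simp add: adj_def)

lemma deg_eq_sum_adj: "deg E v = (\<Sum>u\<in>UNIV. adj E v u)"
  by (simp add: deg_def degree_def adj_def sum.If_cases)

lemma laplacian_mult_vec:
  "(laplacian E *v x) $ i = deg E i * x $ i - (\<Sum>j\<in>UNIV. adj E i j * x $ j)"
  by (simp add: matrix_vector_mult_def laplacian_def deg_def adj_def left_diff_distrib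
      sum_subtractf if_distrib[of "\<lambda>a. a * _"] cong: if_cong)

lemma laplacian_mult_vec_centered_nbhd:
  "(laplacian E *v centered_nbhd E w) $ i = deg E i * adj E w i - (\<Sum>j\<in>UNIV. adj E i j * adj E w j)"
  by (simp add: laplacian_mult_vec centered_nbhd_def right_diff_distrib sum_subtractf
      deg_eq_sum_adj[of E i] sum_distrib_right[symmetric] sum_divide_distrib[symmetric])

lemma norm_centered_nbhd:
  fixes E :: "'n::finite \<Rightarrow> 'n \<Rightarrow> bool"
  shows "centered_nbhd E w \<bullet> centered_nbhd E w = deg E w - (deg E w)\<^sup>2 / real CARD('n)"
proof -
  have "centered_nbhd E w \<bullet> centered_nbhd E w = (\<Sum>v\<in>UNIV. (adj E w v - deg E w / real CARD('n))\<^sup>2)"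
    by (simp add: inner_vec_def centered_nbhd_def power2_eq_square)
  also have "\<dots> = deg E w - (deg E w)\<^sup>2 / real CARD('n)"
    using sum_squared_deviation[of UNIV "adj E w"]
    by (simp add: deg_eq_sum_adj power2_eq_square)
  finally show ?thesis .
qed

lemma regular_graph_iff_sum_deg_squared:
  fixes E :: "'n::finite \<Rightarrow> 'n \<Rightarrow> bool"
  shows "regular_graph E \<longleftrightarrow> (\<Sum>v\<in>UNIV. deg E v)\<^sup>2 = real CARD('n) * (\<Sum>v\<in>UNIV. (deg E v)\<^sup>2)"
proof
  assume "regular_graph E"
  then obtain d where "\<And>v. degree E v = d" by (auto simp: regular_graph_def)
  then show "(\<Sum>v\<in>UNIV. deg E v)\<^sup>2 = real CARD('n) * (\<Sum>v\<in>UNIV. (deg E v)\<^sup>2)"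
    by (simp add: deg_def power2_eq_square)
next
  assume eq: "(\<Sum>v\<in>UNIV. deg E v)\<^sup>2 = real CARD('n) * (\<Sum>v\<in>UNIV. (deg E v)\<^sup>2)"
  define a where "a = (\<Sum>v\<in>UNIV. deg E v) / real CARD('n)"
  have "(\<Sum>v\<in>UNIV. (deg E v - a)\<^sup>2) = 0"
    using sum_squared_deviation[of UNIV "deg E"] eq by (simp add: a_def)
  then have "deg E v = a" for v
    using sum_nonneg_eq_0_iff[of UNIV "\<lambda>v. (deg E v - a)\<^sup>2"] by simp
  then have "degree E v = degree E u" for u v
    by (metis deg_def of_nat_eq_iff)
  then show "regular_graph E"
    unfolding regular_graph_def by blast
qed

lemma complete_multipartite_centered_nbhd_eigenvector:
  fixes E :: "'n::finite \<Rightarrow> 'n \<Rightarrow> bool"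
  assumes part: "\<And>u v. E u v \<longleftrightarrow> f u \<noteq> f v"
  shows "laplacian E *v centered_nbhd E w = real CARD('n) *\<^sub>R centered_nbhd E w"
proof (rule vec_eq_iff[THEN iffD2], rule allI)
  fix i
  have "(\<Sum>j\<in>UNIV. adj E i j * adj E w j) = (if f i = f w then deg E w else deg E i - real CARD('n) + deg E w)"
  proof (cases "f i = f w")
    case True
    then have "(\<Sum>j\<in>UNIV. adj E i j * adj E w j) = deg E w"
      unfolding deg_eq_sum_adj by (intro sum.cong) (auto simp: adj_def part)
    then show ?thesis using True by simp
  next
    case False
    then have "(\<Sum>j\<in>UNIV. adj E i j * adj E w j) = (\<Sum>j\<in>UNIV. adj E i j - (1 - adj E w j))"
      by (intro sum.cong) (auto simp: adj_def part)
    then show ?thesis using False by (simp add: deg_eq_sum_adj sum_subtractf)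
  qed
  moreover have "adj E w i = (if f i = f w then 0 else 1)"
    by (auto simp: adj_def part)
  ultimately show "(laplacian E *v centered_nbhd E w) $ i = (real CARD('n) *\<^sub>R centered_nbhd E w) $ i"
    unfolding laplacian_mult_vec_centered_nbhd by (simp add: centered_nbhd_def field_simps)
qed

lemma regular_complete_multipartite_imp_regular:
  fixes E :: "'n::finite \<Rightarrow> 'n \<Rightarrow> bool"
  assumes "regular_complete_multipartite E"
  shows "regular_graph E"
proof -
  obtain k and f :: "'n \<Rightarrow> nat" where "k \<ge> 2" and range: "range f = {0..<k}"
    and equal: "\<forall>i<k. \<forall>j<k. card {v. f v = i} = card {v. f v = j}"
    and part: "\<forall>u v. E u v \<longleftrightarrow> f u \<noteq> f v"
    using assms unfolding regular_complete_multipartite_def by blast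
  have "card {u. f u = f v} = card {u. f u = 0}" for v
    using equal range \<open>k \<ge> 2\<close> by (metis atLeastLessThan_iff pos2 order.strict_trans2 rangeI)
  moreover have "degree E v = CARD('n) - card {u. f u = f v}" for v
  proof -
    have "{u. E v u} = UNIV - {u. f u = f v}" using part by auto
    then show ?thesis by (simp add: degree_def card_Diff_subset)
  qed
  ultimately show ?thesis
    unfolding regular_graph_def by metis
qed

context
  fixes E :: "'n::finite \<Rightarrow> 'n \<Rightarrow> bool"
  assumes simple: "simple_graph E"
begin

lemma edge_sym: "E u v \<Longrightarrow> E v u"
  using simple by (simp add: simple_graph_def)

lemma no_self_loop: "\<not> E v v"
  using simple by (simp add: simple_graph_def)

lemma adj_commute: "adj E u v = adj E v u"
  using simple by (simp add: adj_def simple_graph_def)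

lemma adj_self [simp]: "adj E v v = 0"
  using simple by (simp add: adj_def simple_graph_def)

lemma transpose_laplacian: "transpose (laplacian E) = laplacian E"
  using simple by (simp add: transpose_def laplacian_def simple_graph_def vec_eq_iff)

lemma deg_eq_sum_adj': "deg E v = (\<Sum>u\<in>UNIV. adj E u v)"
  by (simp add: deg_eq_sum_adj adj_commute)

lemma laplacian_quadratic_form:
  "2 * (x \<bullet> (laplacian E *v x)) = (\<Sum>i\<in>UNIV. \<Sum>j\<in>UNIV. adj E i j * (x $ i - x $ j)\<^sup>2)"
proof -
  have "(\<Sum>i\<in>UNIV. \<Sum>j\<in>UNIV. adj E i j * (x $ j)\<^sup>2) = (\<Sum>j\<in>UNIV. \<Sum>i\<in>UNIV. adj E i j * (x $ j)\<^sup>2)"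
    by (rule sum.swap)
  also have "\<dots> = (\<Sum>i\<in>UNIV. \<Sum>j\<in>UNIV. adj E i j * (x $ i)\<^sup>2)"
    by (simp add: deg_eq_sum_adj' flip: deg_eq_sum_adj sum_distrib_right)
  finally have swap: "(\<Sum>i\<in>UNIV. \<Sum>j\<in>UNIV. adj E i j * (x $ j)\<^sup>2) = (\<Sum>i\<in>UNIV. \<Sum>j\<in>UNIV. adj E i j * (x $ i)\<^sup>2)" .
  have "(\<Sum>i\<in>UNIV. \<Sum>j\<in>UNIV. adj E i j * (x $ i - x $ j)\<^sup>2)
      = (\<Sum>i\<in>UNIV. \<Sum>j\<in>UNIV. adj E i j * (x $ i)\<^sup>2) + (\<Sum>i\<in>UNIV. \<Sum>j\<in>UNIV. adj E i j * (x $ j)\<^sup>2)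
        - 2 * (\<Sum>i\<in>UNIV. \<Sum>j\<in>UNIV. adj E i j * x $ i * x $ j)"
    by (simp add: power2_eq_square algebra_simps sum.distrib sum_subtractf sum_distrib_left)
  also have "\<dots> = 2 * (x \<bullet> (laplacian E *v x))"
    unfolding swap
    by (simp add: inner_vec_def laplacian_mult_vec deg_eq_sum_adj power2_eq_square algebra_simps
        sum_subtractf sum_distrib_left sum_distrib_right)
  finally show ?thesis ..
qed

lemma laplacian_quadratic_form_le_card: "x \<bullet> (laplacian E *v x) \<le> real CARD('n) * (x \<bullet> x)"
proof -
  have "(\<Sum>i\<in>UNIV. \<Sum>j\<in>UNIV. (x $ i - x $ j)\<^sup>2)
      = (\<Sum>i\<in>UNIV. \<Sum>j\<in>(UNIV::'n set). (x $ i)\<^sup>2 + (x $ j)\<^sup>2 - 2 * (x $ i * x $ j))"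
    by (simp add: power2_eq_square algebra_simps)
  also have "\<dots> = 2 * (real CARD('n) * (x \<bullet> x)) - 2 * (\<Sum>i\<in>UNIV. \<Sum>j\<in>UNIV. x $ i * x $ j)"
    by (simp add: sum.distrib sum_subtractf inner_vec_def power2_eq_square sum_distrib_left mult.assoc)
  also have "(\<Sum>i\<in>UNIV. \<Sum>j\<in>UNIV. x $ i * x $ j) = (\<Sum>i\<in>UNIV. x $ i)\<^sup>2"
    unfolding power2_eq_square by (rule sum_product[symmetric])
  finally have all_pairs: "(\<Sum>i\<in>UNIV. \<Sum>j\<in>UNIV. (x $ i - x $ j)\<^sup>2)
      = 2 * (real CARD('n) * (x \<bullet> x)) - 2 * (\<Sum>i\<in>UNIV. x $ i)\<^sup>2" .
  have "2 * (x \<bullet> (laplacian E *v x)) \<le> (\<Sum>i\<in>UNIV. \<Sum>j\<in>UNIV. (x $ i - x $ j)\<^sup>2)"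
    unfolding laplacian_quadratic_form by (intro sum_mono) (simp add: adj_def)
  then show ?thesis
    unfolding all_pairs using zero_le_power2[of "\<Sum>i\<in>UNIV. x $ i"] by linarith
qed

lemma eigenvalue_lap_max_eig: "eigenvalue (laplacian E) (lap_max_eig E)"
  unfolding lap_max_eig_def by (rule symmetric_Max_eigenvalue(1)[OF transpose_laplacian])

lemma quadratic_form_le_lap_max_eig: "x \<bullet> (laplacian E *v x) \<le> lap_max_eig E * (x \<bullet> x)"
  unfolding lap_max_eig_def by (rule symmetric_Max_eigenvalue(2)[OF transpose_laplacian])

lemma lap_max_eig_le_card: "lap_max_eig E \<le> real CARD('n)"
  using eigenvalue_le_rayleigh_bound[OF eigenvalue_lap_max_eig laplacian_quadratic_form_le_card] .

lemma deg_le: "deg E v \<le> real CARD('n) - 1"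
proof -
  have "{u. E v u} \<subset> UNIV"
    using simple by (auto simp: simple_graph_def)
  then have "degree E v + 1 \<le> CARD('n)"
    unfolding degree_def by (simp add: psubset_card_mono Suc_leI)
  then have "real (degree E v + 1) \<le> real CARD('n)"
    by (rule of_nat_mono)
  then show ?thesis
    by (simp add: deg_def)
qed

lemma card_ordered_edges: "card {(u, v). E u v} = 2 * num_edges E"
proof -
  have "card {(u, v). E u v} = 2 * card ((\<lambda>(u, v). {u, v}) ` {(u, v). E u v})"
  proof (rule card_eq_mult_card_image)
    fix e assume "e \<in> (\<lambda>(u, v). {u, v}) ` {(u, v). E u v}"
    then obtain u v where "E u v" and e: "e = {u, v}" by auto
    then have "u \<noteq> v" and "E v u"
      using simple by (auto simp: simple_graph_def)
    then have "{p \<in> {(u, v). E u v}. (\<lambda>(u, v). {u, v}) p = e} = {(u, v), (v, u)}"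
      using \<open>E u v\<close> e by (auto simp: doubleton_eq_iff)
    then show "card {p \<in> {(u, v). E u v}. (\<lambda>(u, v). {u, v}) p = e} = 2"
      using \<open>u \<noteq> v\<close> by simp
  qed simp
  also have "(\<lambda>(u, v). {u, v}) ` {(u, v). E u v} = edges E"
    by (auto simp: edges_def)
  finally show ?thesis by (simp add: num_edges_def)
qed

lemma sum_deg: "(\<Sum>v\<in>UNIV. deg E v) = 2 * real (num_edges E)"
proof -
  have "{(u, v). E u v} = (SIGMA u:UNIV. {v. E u v})" by auto
  then have "card {(u, v). E u v} = (\<Sum>u\<in>UNIV. degree E u)"
    by (simp add: degree_def)
  then show ?thesis
    by (simp add: deg_def card_ordered_edges flip: of_nat_sum)
qed

lemma card_ordered_triangles:
  "card {(a, b, c). E a b \<and> E b c \<and> E a c} = 6 * num_triangles E"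
proof -
  let ?T = "{(a, b, c). E a b \<and> E b c \<and> E a c}"
  let ?set = "\<lambda>(a, b, c). {a, b, c}"
  have "card ?T = 6 * card (?set ` ?T)"
  proof (rule card_eq_mult_card_image)
    fix X assume "X \<in> ?set ` ?T"
    then obtain x y z where xyz: "E x y" "E y z" "E x z" and X: "X = {x, y, z}" by auto
    then have distinct: "x \<noteq> y" "y \<noteq> z" "x \<noteq> z" and sym: "E y x" "E z y" "E z x"
      using simple by (auto simp: simple_graph_def)
    have "{p \<in> ?T. ?set p = X} = {(x,y,z), (x,z,y), (y,x,z), (y,z,x), (z,x,y), (z,y,x)}"
    proof (intro equalityI subsetI)
      fix p assume "p \<in> {p \<in> ?T. ?set p = X}"
      then obtain a b c where p: "p = (a, b, c)" and abc: "E a b" "E b c" "E a c" "{a, b, c} = X"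
        by auto
      then have "a \<noteq> b" "b \<noteq> c" "a \<noteq> c"
        using simple by (auto simp: simple_graph_def)
      moreover have "a \<in> {x, y, z}" "b \<in> {x, y, z}" "c \<in> {x, y, z}"
        using abc(4) X by auto
      ultimately show "p \<in> {(x,y,z), (x,z,y), (y,x,z), (y,z,x), (z,x,y), (z,y,x)}"
        unfolding p by auto
    qed (use xyz sym X in \<open>auto simp: insert_commute\<close>)
    then show "card {p \<in> ?T. ?set p = X} = 6"
      using distinct by simp
  qed simp
  also have "?set ` ?T = triangles E"
    by (auto simp: triangles_def)
  finally show ?thesis by (simp add: num_triangles_def)
qed

lemma sum_adj_triangles:
  "(\<Sum>a\<in>UNIV. \<Sum>b\<in>UNIV. \<Sum>c\<in>UNIV. adj E a b * adj E b c * adj E a c) = 6 * real (num_triangles E)"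
proof -
  have "{(a, b, c). E a b \<and> E b c \<and> E a c} = (SIGMA a:UNIV. SIGMA b:UNIV. {c. E a b \<and> E b c \<and> E a c})"
    by auto
  then have "real (card {(a, b, c). E a b \<and> E b c \<and> E a c})
      = (\<Sum>a\<in>UNIV. \<Sum>b\<in>UNIV. real (card {c. E a b \<and> E b c \<and> E a c}))"
    by simp
  then have "6 * real (num_triangles E) = (\<Sum>a\<in>UNIV. \<Sum>b\<in>UNIV. real (card {c. E a b \<and> E b c \<and> E a c}))"
    by (simp add: card_ordered_triangles)
  also have "\<dots> = (\<Sum>a\<in>UNIV. \<Sum>b\<in>UNIV. \<Sum>c\<in>UNIV. adj E a b * adj E b c * adj E a c)"
    unfolding real_card_Collect adj_def by (intro sum.cong refl) auto
  finally show ?thesis by simp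
qed

lemma sum_laplacian_mult_vec: "(\<Sum>i\<in>UNIV. (laplacian E *v y) $ i) = 0"
proof -
  have "(\<Sum>i\<in>UNIV. \<Sum>j\<in>UNIV. adj E i j * y $ j) = (\<Sum>j\<in>UNIV. \<Sum>i\<in>UNIV. adj E i j * y $ j)"
    by (rule sum.swap)
  also have "\<dots> = (\<Sum>j\<in>UNIV. deg E j * y $ j)"
    by (simp add: deg_eq_sum_adj' sum_distrib_right)
  finally show ?thesis
    by (simp add: laplacian_mult_vec sum_subtractf)
qed

lemma quadratic_form_centered_nbhd:
  "centered_nbhd E w \<bullet> (laplacian E *v centered_nbhd E w)
    = (\<Sum>i\<in>UNIV. adj E w i * deg E i) - (\<Sum>i\<in>UNIV. \<Sum>j\<in>UNIV. adj E w i * adj E i j * adj E w j)"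
proof -
  let ?y = "laplacian E *v centered_nbhd E w"
  have "centered_nbhd E w \<bullet> ?y = (\<Sum>i\<in>UNIV. adj E w i * ?y $ i) - deg E w / real CARD('n) * (\<Sum>i\<in>UNIV. ?y $ i)"
    by (simp add: inner_vec_def centered_nbhd_def left_diff_distrib sum_subtractf sum_distrib_left)
  also have "\<dots> = (\<Sum>i\<in>UNIV. adj E w i * ?y $ i)"
    by (simp add: sum_laplacian_mult_vec)
  also have "\<dots> = (\<Sum>i\<in>UNIV. adj E w i * deg E i - (\<Sum>j\<in>UNIV. adj E w i * adj E i j * adj E w j))"
  proof (rule sum.cong[OF refl])
    fix i
    show "adj E w i * ?y $ i = adj E w i * deg E i - (\<Sum>j\<in>UNIV. adj E w i * adj E i j * adj E w j)"
      by (cases "E w i") (simp_all add: laplacian_mult_vec_centered_nbhd adj_def)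
  qed
  finally show ?thesis by (simp add: sum_subtractf)
qed

lemma sum_adj_deg: "(\<Sum>w\<in>UNIV. \<Sum>i\<in>UNIV. adj E w i * deg E i) = (\<Sum>i\<in>UNIV. (deg E i)\<^sup>2)"
proof -
  have "(\<Sum>w\<in>UNIV. \<Sum>i\<in>UNIV. adj E w i * deg E i) = (\<Sum>i\<in>UNIV. \<Sum>w\<in>UNIV. adj E w i * deg E i)"
    by (rule sum.swap)
  then show ?thesis
    by (simp add: deg_eq_sum_adj' power2_eq_square flip: sum_distrib_right)
qed

lemma sum_quadratic_form_centered_nbhd:
  "(\<Sum>w\<in>UNIV. centered_nbhd E w \<bullet> (laplacian E *v centered_nbhd E w))
    = (\<Sum>v\<in>UNIV. (deg E v)\<^sup>2) - 6 * real (num_triangles E)"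
  by (simp add: quadratic_form_centered_nbhd sum_subtractf sum_adj_deg sum_adj_triangles)

lemma sum_norm_centered_nbhd:
  "(\<Sum>w\<in>UNIV. centered_nbhd E w \<bullet> centered_nbhd E w)
    = 2 * real (num_edges E) - (\<Sum>v\<in>UNIV. (deg E v)\<^sup>2) / real CARD('n)"
  by (simp add: norm_centered_nbhd sum_subtractf sum_deg flip: sum_divide_distrib)

lemma six_triangles_le_sum_deg_squared: "6 * real (num_triangles E) \<le> (\<Sum>v\<in>UNIV. (deg E v)\<^sup>2)"
proof -
  have "6 * real (num_triangles E) \<le> (\<Sum>w\<in>UNIV. \<Sum>i\<in>UNIV. \<Sum>j\<in>UNIV. adj E w i * adj E i j)"
    unfolding sum_adj_triangles[symmetric] by (intro sum_mono) (simp add: adj_def)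
  also have "\<dots> = (\<Sum>v\<in>UNIV. (deg E v)\<^sup>2)"
    by (simp add: deg_eq_sum_adj[symmetric] sum_distrib_left[symmetric] sum_adj_deg)
  finally show ?thesis .
qed

lemma twice_num_edges_lt: "2 * real (num_edges E) < (real CARD('n))\<^sup>2"
proof -
  have "(\<Sum>v\<in>UNIV. deg E v) \<le> (\<Sum>v\<in>(UNIV::'n set). real CARD('n) - 1)"
    by (intro sum_mono deg_le)
  then have "2 * real (num_edges E) + real CARD('n) \<le> real CARD('n) * real CARD('n)"
    by (simp add: sum_deg algebra_simps)
  moreover have "0 < real CARD('n)" by simp
  ultimately show ?thesis
    unfolding power2_eq_square by linarith
qed

lemma sum_deg_squared_lt:
  assumes "num_edges E \<ge> 1"
  shows "(\<Sum>v\<in>UNIV. (deg E v)\<^sup>2) < real CARD('n) * (2 * real (num_edges E))"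
proof -
  have "(\<Sum>v\<in>UNIV. (deg E v)\<^sup>2) \<le> (\<Sum>v\<in>UNIV. (real CARD('n) - 1) * deg E v)"
    unfolding power2_eq_square by (intro sum_mono mult_right_mono deg_le) (simp add: deg_def)
  also have "\<dots> < real CARD('n) * (2 * real (num_edges E))"
    using assms by (simp add: sum_deg flip: sum_distrib_left)
  finally show ?thesis .
qed

lemma sum_norm_centered_nbhd_pos:
  assumes "num_edges E \<ge> 1"
  shows "0 < (\<Sum>w\<in>UNIV. centered_nbhd E w \<bullet> centered_nbhd E w)"
  using sum_deg_squared_lt[OF assms] by (simp add: sum_norm_centered_nbhd field_simps)

lemma triangle_bound_le_nbhd_quotient:
  assumes "num_edges E \<ge> 1"
  shows "(2 * real (num_edges E)^2 - 3 * real CARD('n) * real (num_triangles E))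
      / (real (num_edges E) * (real CARD('n)^2 - 2 * real (num_edges E))) * real CARD('n)
      \<le> nbhd_quotient E" (is "?bound \<le> _")
    and "(2 * real (num_edges E)^2 - 3 * real CARD('n) * real (num_triangles E))
      / (real (num_edges E) * (real CARD('n)^2 - 2 * real (num_edges E))) * real CARD('n)
      = nbhd_quotient E \<longleftrightarrow> regular_graph E"
proof -
  let ?s = "\<Sum>v\<in>UNIV. (deg E v)\<^sup>2"
  have quotient: "nbhd_quotient E = (?s - 6 * real (num_triangles E)) / (2 * real (num_edges E) - ?s / real CARD('n))"
    by (simp add: nbhd_quotient_def sum_quadratic_form_centered_nbhd sum_norm_centered_nbhd)
  have s_lt: "?s < real CARD('n) * (2 * real (num_edges E))"
    by (rule sum_deg_squared_lt[OF assms])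
  have "(2 * real (num_edges E))\<^sup>2 \<le> ?s * real CARD('n)"
    using sum_squared_le_sum_of_squares[of "deg E" UNIV] by (simp add: sum_deg)
  then have cauchy: "4 * (real (num_edges E))\<^sup>2 \<le> real CARD('n) * ?s"
    by (simp add: power2_eq_square algebra_simps)
  have six_t: "6 * real (num_triangles E) < real CARD('n) * (2 * real (num_edges E))"
    using six_triangles_le_sum_deg_squared s_lt by linarith
  have "real (num_edges E) > 0" using assms by simp
  note bound = triangle_bound_le_quotient[OF _ this twice_num_edges_lt six_t cauchy s_lt]
  have "?bound \<le> nbhd_quotient E \<and> (?bound = nbhd_quotient E \<longleftrightarrow> 4 * (real (num_edges E))\<^sup>2 = real CARD('n) * ?s)"
    unfolding quotient using bound by simp
  moreover have "regular_graph E \<longleftrightarrow> 4 * (real (num_edges E))\<^sup>2 = real CARD('n) * ?s"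
    by (simp add: regular_graph_iff_sum_deg_squared sum_deg power2_eq_square)
  ultimately show "?bound \<le> nbhd_quotient E" and "?bound = nbhd_quotient E \<longleftrightarrow> regular_graph E"
    by simp_all
qed

lemma nbhd_quotient_le_lap_max_eig:
  assumes "num_edges E \<ge> 1"
  shows "nbhd_quotient E \<le> lap_max_eig E"
  using sum_quadratic_forms_le[OF quadratic_form_le_lap_max_eig, of "centered_nbhd E" UNIV]
    sum_norm_centered_nbhd_pos[OF assms]
  by (simp add: nbhd_quotient_def divide_le_eq)

lemma nbhd_quotient_eq_lap_max_eig_iff:
  assumes "num_edges E \<ge> 1"
  shows "nbhd_quotient E = lap_max_eig E
    \<longleftrightarrow> (\<forall>w. laplacian E *v centered_nbhd E w = lap_max_eig E *\<^sub>R centered_nbhd E w)"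
  using sum_quadratic_forms_eq_iff[OF transpose_laplacian quadratic_form_le_lap_max_eig,
      of UNIV "centered_nbhd E"]
    sum_norm_centered_nbhd_pos[OF assms]
  by (simp add: nbhd_quotient_def divide_eq_eq)

lemma nbhd_quotient_eq_if_eigenvectors:
  assumes "num_edges E \<ge> 1"
    and "\<And>w. laplacian E *v centered_nbhd E w = \<mu> *\<^sub>R centered_nbhd E w"
  shows "nbhd_quotient E = \<mu>"
  using sum_norm_centered_nbhd_pos[OF assms(1)]
  by (simp add: nbhd_quotient_def assms(2) flip: sum_distrib_left)

lemma centered_nbhd_eigenvalue_eq_card:
  assumes eig: "\<And>w. laplacian E *v centered_nbhd E w = \<mu> *\<^sub>R centered_nbhd E w"
    and "E u v"
  shows "\<mu> = real CARD('n)"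
proof -
  have "- deg E u = deg E u * adj E u u - (\<Sum>j\<in>UNIV. adj E u j * adj E u j)"
    by (simp add: deg_eq_sum_adj[of E u])
  also have "\<dots> = (laplacian E *v centered_nbhd E u) $ u"
    by (rule laplacian_mult_vec_centered_nbhd[symmetric])
  also have "\<dots> = \<mu> * (- deg E u / real CARD('n))"
    unfolding eig by (simp add: centered_nbhd_def)
  finally have "- deg E u = \<mu> * (- deg E u / real CARD('n))" .
  moreover have "deg E u \<noteq> 0"
    using \<open>E u v\<close> by (auto simp: deg_def degree_def card_eq_0_iff)
  ultimately show ?thesis by (simp add: field_simps)
qed

text \<open>Comparing the \<open>v\<close>-th coordinates of \<open>L x\<^sub>w = n x\<^sub>w\<close> for non-adjacent \<open>v\<close> and \<open>w\<close>
  shows that \<open>v\<close> and \<open>w\<close> have \<open>deg w\<close> common neighbours.\<close>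
lemma nonadjacent_imp_nbhd_subset:
  assumes eig: "\<And>w. laplacian E *v centered_nbhd E w = real CARD('n) *\<^sub>R centered_nbhd E w"
    and "\<not> E w v" and "E w j"
  shows "E v j"
proof -
  have "(laplacian E *v centered_nbhd E w) $ v = (real CARD('n) *\<^sub>R centered_nbhd E w) $ v"
    by (simp only: eig)
  then have "(\<Sum>j\<in>UNIV. adj E v j * adj E w j) = deg E w"
    unfolding laplacian_mult_vec_centered_nbhd using \<open>\<not> E w v\<close>
    by (simp add: centered_nbhd_def adj_def)
  then have "(\<Sum>j\<in>UNIV. adj E w j - adj E v j * adj E w j) = 0"
    by (simp add: sum_subtractf deg_eq_sum_adj)
  moreover have "\<forall>j\<in>UNIV. 0 \<le> adj E w j - adj E v j * adj E w j"
    by (simp add: adj_def)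
  ultimately have "adj E w j - adj E v j * adj E w j = 0"
    using sum_nonneg_eq_0_iff[of UNIV "\<lambda>j. adj E w j - adj E v j * adj E w j"] by simp
  then show ?thesis
    using \<open>E w j\<close> by (simp add: adj_def split: if_splits)
qed

text \<open>The parts are the non-neighbourhoods \<open>{u. \<not> E v u}\<close>; the hypothesis makes non-adjacency
  an equivalence relation.\<close>
lemma regular_complete_multipartite_if_nonadjacent_twins:
  assumes twins: "\<And>w v j. \<not> E w v \<Longrightarrow> E w j \<Longrightarrow> E v j"
    and "regular_graph E" and "E u\<^sub>0 v\<^sub>0"
  shows "regular_complete_multipartite E"
proof -
  obtain d where deg: "\<And>v. degree E v = d"
    using \<open>regular_graph E\<close> by (auto simp: regular_graph_def)
  define part where "part v = {u. \<not> E v u}" for v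
  have part_eq_iff: "part u = part v \<longleftrightarrow> \<not> E u v" for u v
  proof
    assume "part u = part v"
    moreover have "u \<in> part u" using no_self_loop by (simp add: part_def)
    ultimately show "\<not> E u v" using edge_sym by (auto simp: part_def)
  next
    assume "\<not> E u v"
    then have "\<not> E v u" using edge_sym by blast
    then have "E u j \<longleftrightarrow> E v j" for j
      using twins \<open>\<not> E u v\<close> by blast
    then show "part u = part v" by (simp add: part_def)
  qed
  obtain h where h: "bij_betw h (range part) {0..<card (range part)}"
    using ex_bij_betw_finite_nat[OF finite] by blast
  define f where "f v = h (part v)" for v
  have f_eq_iff: "f u = f v \<longleftrightarrow> \<not> E u v" for u v
  proof -
    have "f u = f v \<longleftrightarrow> part u = part v"
      unfolding f_def by (rule inj_on_eq_iff[OF bij_betw_imp_inj_on[OF h]]) auto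
    then show ?thesis by (simp add: part_eq_iff)
  qed
  have range_f: "range f = {0..<card (range part)}"
    using h by (auto simp: f_def bij_betw_def image_comp)
  have "part u\<^sub>0 \<noteq> part v\<^sub>0" using part_eq_iff \<open>E u\<^sub>0 v\<^sub>0\<close> by simp
  then have "card {part u\<^sub>0, part v\<^sub>0} \<le> card (range part)"
    by (intro card_mono) auto
  then have "2 \<le> card (range part)"
    using \<open>part u\<^sub>0 \<noteq> part v\<^sub>0\<close> by simp
  moreover have part_size: "card {v. f v = i} = CARD('n) - d" if "i < card (range part)" for i
  proof -
    have "i \<in> range f" using that range_f by simp
    then obtain w where "i = f w" by blast
    then have "{v. f v = i} = UNIV - {u. E w u}"
      using f_eq_iff edge_sym by blast
    then show ?thesis
      using deg[of w] by (simp add: card_Diff_subset degree_def)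
  qed
  ultimately show ?thesis
    unfolding regular_complete_multipartite_def
  proof (intro exI conjI allI impI)
    show "E u v \<longleftrightarrow> f u \<noteq> f v" for u v using f_eq_iff by simp
    show "card {v. f v = i} = card {v. f v = j}" if "i < card (range part)" "j < card (range part)" for i j
      using part_size that by simp
  qed (use range_f in simp_all)
qed


lemma regular_complete_multipartite_if_centered_nbhd_eigenvectors:
  assumes "num_edges E \<ge> 1" and "regular_graph E"
    and eig: "\<And>w. laplacian E *v centered_nbhd E w = \<mu> *\<^sub>R centered_nbhd E w"
  shows "regular_complete_multipartite E"
proof -
  obtain u v where "E u v"
    using assms(1) by (fastforce simp: num_edges_def edges_def)
  then have "\<mu> = real CARD('n)"
    by (rule centered_nbhd_eigenvalue_eq_card[OF eig])
  then have "\<And>w. laplacian E *v centered_nbhd E w = real CARD('n) *\<^sub>R centered_nbhd E w"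
    using eig by simp
  then show ?thesis
    by (rule regular_complete_multipartite_if_nonadjacent_twins[OF nonadjacent_imp_nbhd_subset
          \<open>regular_graph E\<close> \<open>E u v\<close>])
qed
end

theorem theorem2:
  fixes E :: "'n::finite \<Rightarrow> 'n \<Rightarrow> bool"
  assumes "simple_graph E"
    and "num_edges E \<ge> 1"
  shows "lap_max_eig E \<ge>
           (2 * real (num_edges E)^2 - 3 * real CARD('n) * real (num_triangles E))
           / (real (num_edges E) * (real CARD('n)^2 - 2 * real (num_edges E))) * real CARD('n)
         \<and> (lap_max_eig E =
           (2 * real (num_edges E)^2 - 3 * real CARD('n) * real (num_triangles E))
           / (real (num_edges E) * (real CARD('n)^2 - 2 * real (num_edges E))) * real CARD('n)
            \<longleftrightarrow> regular_complete_multipartite E)"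
    (is "?bound \<le> lap_max_eig E \<and> (lap_max_eig E = ?bound \<longleftrightarrow> _)")
proof -
  note bound = triangle_bound_le_nbhd_quotient[OF assms]
  note quotient = nbhd_quotient_le_lap_max_eig[OF assms] nbhd_quotient_eq_lap_max_eig_iff[OF assms]
  have "lap_max_eig E = ?bound \<longleftrightarrow> regular_complete_multipartite E"
  proof
    assume "lap_max_eig E = ?bound"
    then have "regular_graph E"
      and "\<And>w. laplacian E *v centered_nbhd E w = lap_max_eig E *\<^sub>R centered_nbhd E w"
      using bound quotient by auto
    then show "regular_complete_multipartite E"
      by (rule regular_complete_multipartite_if_centered_nbhd_eigenvectors[OF assms])
  next
    assume rcm: "regular_complete_multipartite E"
    then obtain f :: "'n \<Rightarrow> nat" where "\<And>u v. E u v \<longleftrightarrow> f u \<noteq> f v"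
      by (auto simp: regular_complete_multipartite_def)
    then have "nbhd_quotient E = CARD('n)"
      by (intro nbhd_quotient_eq_if_eigenvectors[OF assms] complete_multipartite_centered_nbhd_eigenvector)
    then have "?bound = CARD('n)"
      using bound(2) regular_complete_multipartite_imp_regular[OF rcm] by simp
    then show "lap_max_eig E = ?bound"
      using bound quotient lap_max_eig_le_card[OF assms(1)] by linarith
  qed
  then show ?thesis
    using bound quotient by linarith
qed

end
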